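(* Let $\mathbf U$ be a real $3\times 3$ positive-definite symmetric matrix. Let $\hat{\mathbf e}_1\in\mathbb R^3$ with $|\hat{\mathbf e}_1|=1$, define $\hat{\mathbf U}=(-\mathbf I+2\hat{\mathbf e}_1\otimes\hat{\mathbf e}_1)\mathbf U(-\mathbf I+2\hat{\mathbf e}_1\otimes\hat{\mathbf e}_1)$ and suppose $\hat{\mathbf U}\neq\mathbf U$. Then there exists a second unit vector $\hat{\mathbf e}_2$, not parallel to $\hat{\mathbf e}_1$, satisfying $\hat{\mathbf U}=(-\mathbf I+2\hat{\mathbf e}_2\otimes\hat{\mathbf e}_2)\mathbf U(-\mathbf I+2\hat{\mathbf e}_2\otimes\hat{\mathbf e}_2)$ if and only if $\hat{\mathbf e}_1$ is perpendicular to an eigenvector of $\mathbf U$. In the case that $\hat{\mathbf e}_1$ is perpendicular to an eigenvector of $\mathbf U$, such $\hat{\mathbf e}_2$ is unique up to sign and is perpendicular to both $\hat{\mathbf e}_1$ and that eigenvector. Moreover, suppose $\hat{\mathbf e}_1$ is perpendicular to an eigenvector $\mathbf v$ of $\mathbf U$ with $|\mathbf v|=1$, and put $\hat{\mathbf e}_2=\mathbf v\times\hat{\mathbf e}_1$. Then the two solutions $\mathbf a_C^1\otimes\mathbf n_C^1$, $\mathbf a_C^2\otimes\mathbf n_C^2$ (dyads $\mathbf a\otimes\mathbf n$, together with some $\hat{\mathbf R}\in\mathrm{SO}(3)$) of the equation $\hat{\mathbf R}\hat{\mathbf U}-\mathbf U=\mathbf a\otimes\mathbf n$ can be written $$\mathbf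 n_C^1=\hat{\mathbf e}_1,\quad \mathbf a_C^1=\xi\,\mathbf U\hat{\mathbf e}_2,\quad \xi=2\frac{\hat{\mathbf e}_2\cdot\mathbf U^{-2}\hat{\mathbf e}_1}{\hat{\mathbf e}_1\cdot\mathbf U^{-2}\hat{\mathbf e}_1},$$ $$\mathbf n_C^2=\hat{\mathbf e}_2,\quad \mathbf a_C^2=\eta\,\mathbf U\hat{\mathbf e}_1,\quad \eta=-2\frac{\hat{\mathbf e}_2\cdot\mathbf U^{2}\hat{\mathbf e}_1}{\hat{\mathbf e}_1\cdot\mathbf U^{2}\hat{\mathbf e}_1}.$$
   Context: For vectors $\mathbf a,\mathbf n\in\mathbb R^3$, $\mathbf a\otimes\mathbf n$ denotes the $3\times3$ matrix with $(\mathbf a\otimes\mathbf n)\mathbf x=(\mathbf n\cdot\mathbf x)\mathbf a$. $\mathrm{SO}(3)$ is the group of rotations. Solutions of $\hat{\mathbf R}\hat{\mathbf U}-\mathbf U=\mathbf a\otimes\mathbf n$ are counted as distinct only via the dyad $\mathbf a\otimes\mathbf n$ (rescaling $\mathbf a\to\rho\mathbf a$, $\mathbf n\to\mathbf n/\rho$ does not give a new solution). *)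

theory Defs
  imports "HOL-Analysis.Analysis" "HOL-Analysis.Cross3"
begin

definition dyad :: "real^3 \<Rightarrow> real^3 \<Rightarrow> real^3^3" where
  "dyad a n = (\<chi> i j. a $ i * n $ j)"

definition halfturn :: "real^3 \<Rightarrow> real^3^3" where
  "halfturn e = - mat 1 + 2 *\<^sub>R dyad e e"

definition sym_pos_def_matrix :: "real^3^3 \<Rightarrow> bool" where
  "sym_pos_def_matrix U \<longleftrightarrow> transpose U = U \<and> (\<forall>x. x \<noteq> 0 \<longrightarrow> x \<bullet> (U *v x) > 0)"

definition is_eigenvector :: "real^3^3 \<Rightarrow> real^3 \<Rightarrow> bool" where
  "is_eigenvector U v \<longleftrightarrow> v \<noteq> 0 \<and> (\<exists>c. U *v v = c *\<^sub>R v)"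

definition parallel :: "real^3 \<Rightarrow> real^3 \<Rightarrow> bool" where
  "parallel x y \<longleftrightarrow> (\<exists>c. x = c *\<^sub>R y \<or> y = c *\<^sub>R x)"

definition twin_solutions :: "real^3^3 \<Rightarrow> real^3^3 \<Rightarrow> (real^3^3) set" where
  "twin_solutions U Uh = {D. (\<exists>a n R. rotation_matrix R \<and> R ** Uh - U = dyad a n \<and> D = dyad a n)}"

end

theory Submission
  imports Defs
begin

text \<open>
Write Q e for the half-turn about e. If e1 is perpendicular to a unit eigenvector v of U, then U
maps the plane of e1 and e2 = v \<times> e1 into itself, and Q e1 U Q e1 - U = -2q (e1 \<otimes> e2 + e2 \<otimes> e1)
with q = e2 \<bullet> U e1, nonzero as Q e1 U Q e1 \<noteq> U. This is symmetric in e1 and e2, hence e2 is a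
second axis, and reading the same identity in the frame v, e1, e2 shows that every second axis
is \<plusminus>e2. Conversely, if Q e1 U Q e1 = Q e2 U Q e2 for non-parallel axes, both half-turns reverse
w = e1 \<times> e2, so Q e1 and Q e2 agree on U w; this forces U w to be orthogonal to e1 and e2, i.e.
parallel to w.

For a solution R Q e1 U Q e1 - U = a \<otimes> n, the rotation R shows that |Q e1 U Q e1 x| = |U x| for
x orthogonal to n, whereas |Q e1 U Q e1 x|^2 = |U x|^2 - 4q(p+r)(e1 \<bullet> x)(e2 \<bullet> x) with
p = e1 \<bullet> U e1 > 0 and r = e2 \<bullet> U e2 > 0. Hence the plane orthogonal to n is covered by the
planes orthogonal to e1 and e2, so n is parallel to e1 or e2, and R is then determined by its
values on two orthogonal vectors. Both normals are realised by Ball and James' solutions.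
\<close>

lemma symmetric_matrix_inner:
  fixes A :: "real^'n^'n"
  assumes "transpose A = A"
  shows "(A *v x) \<bullet> y = x \<bullet> (A *v y)"
  by (metis assms dot_lmul_matrix vector_transpose_matrix)

lemma orthogonal_matrix_inner:
  fixes R :: "real^'n^'n"
  assumes "orthogonal_matrix R"
  shows "(R *v x) \<bullet> (R *v y) = x \<bullet> y"
proof -
  have "(R *v x) \<bullet> (R *v y) = x \<bullet> (transpose R *v (R *v y))"
    using dot_lmul_matrix[of x "transpose R" "R *v y"] by simp
  then show ?thesis
    using assms by (simp add: orthogonal_matrix matrix_vector_mul_assoc)
qed

lemma inner_diff_scaleR_self:
  fixes a b :: "'a::real_inner"
  shows "(a - c *\<^sub>R b) \<bullet> (a - c *\<^sub>R b) = a \<bullet> a - 2 * c * (a \<bullet> b) + c\<^sup>2 * (b \<bullet> b)"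
  by (simp add: inner_diff_left inner_diff_right inner_commute[of b a] power2_eq_square algebra_simps)

lemma invertible_matrix_inv:
  fixes A :: "'a::semiring_1^'n^'n"
  assumes "invertible A"
  shows "A ** matrix_inv A = mat 1" and "matrix_inv A ** A = mat 1"
  using someI_ex[OF assms[unfolded invertible_def]] unfolding matrix_inv_def by auto

lemma invertible_matrix_inv_mult_vector:
  fixes A :: "'a::comm_semiring_1^'n^'n"
  assumes "invertible A"
  shows "A *v (matrix_inv A *v x) = x" and "matrix_inv A *v (A *v x) = x"
  using invertible_matrix_inv[OF assms] by (simp_all add: matrix_vector_mul_assoc)

lemma symmetric_matrix_inv_inner:
  fixes A :: "real^'n^'n"
  assumes "transpose A = A" "invertible A"
  shows "(matrix_inv A *v x) \<bullet> y = x \<bullet> (matrix_inv A *v y)"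
  by (metis assms invertible_matrix_inv_mult_vector(1) symmetric_matrix_inner)

lemma sym_pos_def_matrix_invertible:
  assumes "sym_pos_def_matrix U"
  shows "invertible U"
proof -
  have "inj ((*v) U)"
  proof (rule injI)
    fix x y
    assume "U *v x = U *v y"
    then have "(x - y) \<bullet> (U *v (x - y)) = 0"
      by (simp add: matrix_vector_mult_diff_distrib)
    moreover have "\<forall>x. x \<noteq> 0 \<longrightarrow> 0 < x \<bullet> (U *v x)"
      using assms by (simp add: sym_pos_def_matrix_def)
    ultimately show "x = y"
      by (metis eq_iff_diff_eq_0 less_irrefl)
  qed
  then show ?thesis
    using matrix_left_invertible_injective invertible_left_inverse by blast
qed

lemma cross3_cross3_left: "cross3 (cross3 a b) y = (a \<bullet> y) *\<^sub>R b - (b \<bullet> y) *\<^sub>R a"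
  unfolding vec_eq_iff forall_3 by (simp add: cross3_def inner_vec_def sum_3) algebra

lemma cross3_eq_0_imp_parallel:
  assumes "cross3 x y = 0"
  shows "parallel y x"
proof -
  have "x = 0 \<or> y = 0 \<or> (\<exists>c. y = c *\<^sub>R x)"
    using assms by (simp add: cross_eq_0 collinear_lemma)
  then show ?thesis
    unfolding parallel_def by (metis scaleR_zero_left scaleR_zero_right)
qed

lemma orthogonal_both_imp_multiple_cross3:
  assumes "y \<bullet> a = 0" "y \<bullet> b = 0" "cross3 a b \<noteq> 0"
  shows "\<exists>c. y = c *\<^sub>R cross3 a b"
proof -
  have "cross3 (cross3 a b) y = 0"
    using assms(1,2) by (simp add: cross3_cross3_left inner_commute)
  then have "collinear {0, cross3 a b, y}"
    using cross_eq_0 by blast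
  with assms(3) have "y = 0 \<or> (\<exists>c. y = c *\<^sub>R cross3 a b)"
    unfolding collinear_lemma by blast
  then show ?thesis
    by (metis scaleR_zero_left)
qed

lemma not_parallel_orthonormal:
  assumes "norm x = 1" "norm y = 1" "x \<bullet> y = 0"
  shows "\<not> parallel x y"
  using assms by (auto simp: parallel_def)

lemma norm_cross3_orthonormal:
  assumes "norm a = 1" "norm b = 1" "a \<bullet> b = 0"
  shows "norm (cross3 a b) = 1"
proof (rule power2_eq_imp_eq)
  show "(norm (cross3 a b))\<^sup>2 = 1\<^sup>2"
    using norm_cross_dot[of a b] assms by simp
qed simp_all

lemma orthonormal_expansion_cross3:
  assumes "norm a = 1" "norm b = 1" "a \<bullet> b = 0"
  shows "x = (x \<bullet> a) *\<^sub>R a + (x \<bullet> b) *\<^sub>R b + (x \<bullet> cross3 a b) *\<^sub>R cross3 a b"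
proof -
  define y where "y = x - (x \<bullet> a) *\<^sub>R a - (x \<bullet> b) *\<^sub>R b"
  have aa: "a \<bullet> a = 1" and bb: "b \<bullet> b = 1" and c: "norm (cross3 a b) = 1"
    using assms norm_cross3_orthonormal[OF assms] by (simp_all add: norm_eq_1)
  have "b \<bullet> a = 0"
    using assms(3) by (simp add: inner_commute)
  then have "y \<bullet> a = 0" "y \<bullet> b = 0"
    unfolding y_def using assms(3) aa bb by (simp_all add: inner_diff_left)
  moreover have "cross3 a b \<noteq> 0"
    using c by auto
  ultimately obtain t where t: "y = t *\<^sub>R cross3 a b"
    using orthogonal_both_imp_multiple_cross3 by blast
  have "y \<bullet> cross3 a b = x \<bullet> cross3 a b"
    unfolding y_def by (simp add: inner_diff_left dot_cross_self)
  moreover have "y \<bullet> cross3 a b = t"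
    using c by (simp add: t norm_eq_1)
  ultimately show ?thesis
    using t unfolding y_def by (simp add: algebra_simps)
qed

lemma rotation_matrix_eq_on_orthogonal_pair:
  fixes R R' :: "real^3^3"
  assumes R: "rotation_matrix R" and R': "rotation_matrix R'"
    and ab: "a \<bullet> b = 0" and "a \<noteq> 0" "b \<noteq> 0"
    and Ra: "R *v a = R' *v a" and Rb: "R *v b = R' *v b"
  shows "R = R'"
proof -
  define a' b' where "a' = sgn a" and "b' = sgn b"
  have unit: "norm a' = 1" "norm b' = 1" and ab': "a' \<bullet> b' = 0"
    using assms(3-5) by (simp_all add: a'_def b'_def norm_sgn sgn_div_norm)
  have Ra': "R *v a' = R' *v a'" and Rb': "R *v b' = R' *v b'"
    using Ra Rb by (simp_all add: a'_def b'_def sgn_div_norm matrix_vector_mult_scaleR)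
  have Rc': "R *v cross3 a' b' = R' *v cross3 a' b'"
    using cross_rotation_matrix[OF R, of a' b'] cross_rotation_matrix[OF R', of a' b'] Ra' Rb' by simp
  show ?thesis
  proof (rule iffD2[OF matrix_eq], rule allI)
    fix x
    note x = orthonormal_expansion_cross3[OF unit ab', of x]
    show "R *v x = R' *v x"
      by (subst (1 2) x) (simp add: matrix_vector_right_distrib matrix_vector_mult_scaleR Ra' Rb' Rc')
  qed
qed

lemma dyad_mult_vector: "dyad a n *v x = (n \<bullet> x) *\<^sub>R a"
  by (simp add: dyad_def vec_eq_iff matrix_vector_mult_def inner_vec_def sum_3 algebra_simps forall_3)

lemma halfturn_mult_vector: "halfturn e *v x = (2 * (e \<bullet> x)) *\<^sub>R e - x"
  by (simp add: halfturn_def dyad_def vec_eq_iff matrix_vector_mult_def inner_vec_def sum_3 mat_def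
      algebra_simps forall_3)

lemma transpose_halfturn: "transpose (halfturn e) = halfturn e"
  by (simp add: halfturn_def dyad_def vec_eq_iff transpose_def mat_def mult.commute)

lemma halfturn_halfturn_mult_vector:
  assumes "norm e = 1"
  shows "halfturn e *v (halfturn e *v x) = x"
  using assms by (simp add: halfturn_mult_vector inner_diff_right norm_eq_1)

lemma halfturn_halfturn:
  assumes "norm e = 1"
  shows "halfturn e ** halfturn e = mat 1"
  by (simp add: matrix_eq halfturn_halfturn_mult_vector[OF assms] flip: matrix_vector_mul_assoc)

lemma det_halfturn:
  assumes "norm e = 1"
  shows "det (halfturn e) = 1"
proof -
  have "det (halfturn e) = 2 * (e$1 * e$1 + e$2 * e$2 + e$3 * e$3) - 1"
    by (simp add: det_3 halfturn_def dyad_def mat_def algebra_simps)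
  also have "e$1 * e$1 + e$2 * e$2 + e$3 * e$3 = 1"
    using assms by (simp add: norm_eq_1 inner_vec_def sum_3)
  finally show ?thesis by simp
qed

lemma rotation_matrix_halfturn:
  assumes "norm e = 1"
  shows "rotation_matrix (halfturn e)"
  using assms unfolding rotation_matrix_def orthogonal_matrix
  by (simp add: transpose_halfturn halfturn_halfturn det_halfturn)

lemma halfturn_conj_mult_vector:
  assumes "transpose U = U"
  shows "(halfturn e ** U ** halfturn e) *v x
       = U *v x + (4 * (e \<bullet> x) * (e \<bullet> (U *v e))) *\<^sub>R e
         - (2 * (e \<bullet> x)) *\<^sub>R (U *v e) - (2 * ((U *v e) \<bullet> x)) *\<^sub>R e"
proof -
  have "e \<bullet> (U *v x) = (U *v e) \<bullet> x"
    using symmetric_matrix_inner[OF assms] by simp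
  then show ?thesis
    by (simp add: halfturn_mult_vector matrix_vector_mult_diff_distrib matrix_vector_mult_scaleR
        scaleR_diff_right flip: matrix_vector_mul_assoc)
qed

lemma halfturn_conj_mult_vector_orthogonal:
  assumes "transpose U = U" "e \<bullet> x = 0"
  shows "(halfturn e ** U ** halfturn e) *v x = U *v x - (2 * ((U *v e) \<bullet> x)) *\<^sub>R e"
  using assms by (simp add: halfturn_conj_mult_vector)

lemma halfturn_conj_mult_vector_plane:
  assumes "transpose U = U" "norm e = 1" "e \<bullet> g = 0" "U *v e = p *\<^sub>R e + q *\<^sub>R g"
  shows "(halfturn e ** U ** halfturn e) *v x = U *v x - (2 * q) *\<^sub>R ((e \<bullet> x) *\<^sub>R g + (g \<bullet> x) *\<^sub>R e)"
proof -
  have "e \<bullet> (U *v e) = p" using assms(2-4) by (simp add: inner_add_right norm_eq_1)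
  moreover have "(U *v e) \<bullet> x = p * (e \<bullet> x) + q * (g \<bullet> x)" using assms(4) by (simp add: inner_add_left)
  ultimately show ?thesis
    unfolding halfturn_conj_mult_vector[OF assms(1)] assms(4)
    by (simp add: scaleR_add_right scaleR_diff_right algebra_simps flip: scaleR_add_left)
qed

lemma halfturn_conj_eq_imp_eigenvector:
  assumes np: "\<not> parallel e2 e1"
    and eq: "halfturn e2 ** U ** halfturn e2 = halfturn e1 ** U ** halfturn e1"
  shows "is_eigenvector U (cross3 e1 e2)"
proof -
  define w where "w = cross3 e1 e2"
  have "w \<noteq> 0"
    using np cross3_eq_0_imp_parallel unfolding w_def by blast
  have "halfturn e *v w = - w" if "e \<in> {e1, e2}" for e
    using that by (auto simp: w_def halfturn_mult_vector dot_cross_self)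
  then have conj: "halfturn e *v (U *v (halfturn e *v w)) = - (halfturn e *v (U *v w))"
    if "e \<in> {e1, e2}" for e
    using that by (simp add: linear_neg[OF matrix_vector_mul_linear])
  define y where "y = U *v w"
  have "(halfturn e2 ** U ** halfturn e2) *v w = (halfturn e1 ** U ** halfturn e1) *v w"
    using eq by simp
  then have "halfturn e2 *v y = halfturn e1 *v y"
    using conj by (simp add: y_def flip: matrix_vector_mul_assoc)
  then have yy: "(e2 \<bullet> y) *\<^sub>R e2 = (e1 \<bullet> y) *\<^sub>R e1"
    by (simp add: halfturn_mult_vector flip: scaleR_scaleR)
  have "e1 \<bullet> y = 0"
  proof (rule ccontr)
    assume "e1 \<bullet> y \<noteq> 0"
    then have "e1 = (1 / (e1 \<bullet> y)) *\<^sub>R ((e1 \<bullet> y) *\<^sub>R e1)"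
      by simp
    also have "\<dots> = ((e2 \<bullet> y) / (e1 \<bullet> y)) *\<^sub>R e2"
      unfolding yy[symmetric] by simp
    finally show False
      using np unfolding parallel_def by blast
  qed
  moreover have "e2 \<noteq> 0"
    using np unfolding parallel_def by (metis scaleR_zero_left)
  ultimately have "e2 \<bullet> y = 0"
    using yy by simp
  with \<open>e1 \<bullet> y = 0\<close> \<open>w \<noteq> 0\<close> obtain c where "y = c *\<^sub>R w"
    using orthogonal_both_imp_multiple_cross3 unfolding w_def by (metis inner_commute)
  then show ?thesis
    using \<open>w \<noteq> 0\<close> unfolding is_eigenvector_def y_def w_def by blast
qed

lemma dyad_solution_mult_vector:
  assumes "R ** B - A = dyad a n"
  shows "R *v (B *v x) = A *v x + (n \<bullet> x) *\<^sub>R a"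
proof -
  have "(R ** B - A) *v x = dyad a n *v x"
    using assms by simp
  then show ?thesis
    by (simp add: matrix_vector_mult_diff_rdistrib dyad_mult_vector algebra_simps
        flip: matrix_vector_mul_assoc)
qed

lemma dyad_solution_norm_eq:
  assumes "orthogonal_matrix R" "R ** B - A = dyad a n" "n \<bullet> x = 0"
  shows "(B *v x) \<bullet> (B *v x) = (A *v x) \<bullet> (A *v x)"
  using orthogonal_matrix_inner[OF assms(1), of "B *v x" "B *v x"]
  by (simp add: dyad_solution_mult_vector[OF assms(2)] assms(3))

text \<open>Ball and James' solution with twin plane normal e; the rotation is the half-turn about
  the axis U\<inverse> e composed with the half-turn about e.\<close>
lemma halfturn_conj_twin_solution:
  assumes "transpose U = U" "invertible U" "norm e = 1"
  defines "c \<equiv> matrix_inv U *v e"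
  shows "\<exists>R. rotation_matrix R \<and>
    R ** (halfturn e ** U ** halfturn e) - U = dyad (2 *\<^sub>R ((1 / (c \<bullet> c)) *\<^sub>R c - U *v e)) e"
proof -
  have Uc: "U *v c = e"
    unfolding c_def using assms(2) by (rule invertible_matrix_inv_mult_vector)
  then have "c \<noteq> 0"
    using assms(3) by auto
  define k where "k = sgn c"
  have k: "norm k = 1"
    using \<open>c \<noteq> 0\<close> by (simp add: k_def norm_sgn)
  define R where "R = halfturn k ** halfturn e"
  have "rotation_matrix R"
    using rotation_matrix_halfturn[OF k] rotation_matrix_halfturn[OF assms(3)]
    by (simp add: R_def rotation_matrix_def orthogonal_matrix_mul det_mul)
  moreover have "(R ** (halfturn e ** U ** halfturn e) - U) *v x
      = dyad (2 *\<^sub>R ((1 / (c \<bullet> c)) *\<^sub>R c - U *v e)) e *v x" for x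
  proof -
    define z where "z = U *v (halfturn e *v x)"
    have z: "z = (2 * (e \<bullet> x)) *\<^sub>R (U *v e) - U *v x"
      unfolding z_def by (simp add: halfturn_mult_vector matrix_vector_mult_diff_distrib
          matrix_vector_mult_scaleR)
    have "c \<bullet> z = e \<bullet> x"
      using assms(3) symmetric_matrix_inner[OF assms(1), of c] Uc
      by (simp add: z inner_diff_right norm_eq_1)
    then have "(2 * (k \<bullet> z)) *\<^sub>R k = (2 * (e \<bullet> x) / (c \<bullet> c)) *\<^sub>R c"
      using \<open>c \<noteq> 0\<close> by (simp add: k_def sgn_div_norm dot_square_norm power2_eq_square field_simps)
    moreover have "(R ** (halfturn e ** U ** halfturn e) - U) *v x = halfturn k *v z - U *v x"
      by (simp add: R_def z_def matrix_vector_mult_diff_rdistrib halfturn_halfturn_mult_vector[OF assms(3)]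
          flip: matrix_vector_mul_assoc)
    ultimately show ?thesis
      by (simp add: halfturn_mult_vector dyad_mult_vector z algebra_simps)
  qed
  ultimately show ?thesis
    unfolding matrix_eq by blast
qed

locale eigen_frame =
  fixes U :: "real^3^3" and e1 v :: "real^3" and lam :: real
  assumes sym_pos_def: "sym_pos_def_matrix U"
    and unit_e1: "norm e1 = 1" and unit_v: "norm v = 1" and e1_v: "e1 \<bullet> v = 0"
    and eigen: "U *v v = lam *\<^sub>R v"
begin

abbreviation "e2 \<equiv> cross3 v e1"
abbreviation "Uh \<equiv> halfturn e1 ** U ** halfturn e1"
abbreviation "Ui \<equiv> matrix_inv U"

definition "p = e1 \<bullet> (U *v e1)"
definition "q = e2 \<bullet> (U *v e1)"
definition "r = e2 \<bullet> (U *v e2)"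

lemma symmetric: "transpose U = U"
  using sym_pos_def by (simp add: sym_pos_def_matrix_def)

lemma pos_def: "x \<noteq> 0 \<Longrightarrow> 0 < x \<bullet> (U *v x)"
  using sym_pos_def by (simp add: sym_pos_def_matrix_def)

lemma U_inner: "(U *v x) \<bullet> y = x \<bullet> (U *v y)"
  using symmetric by (rule symmetric_matrix_inner)

lemma v_e1: "v \<bullet> e1 = 0"
  using e1_v by (simp add: inner_commute)

lemma unit_e2: "norm e2 = 1"
  using norm_cross3_orthonormal unit_v unit_e1 v_e1 .

lemma frame_inner [simp]:
  "e1 \<bullet> e1 = 1" "v \<bullet> v = 1" "e2 \<bullet> e2 = 1"
  "e1 \<bullet> v = 0" "v \<bullet> e1 = 0" "e1 \<bullet> e2 = 0" "e2 \<bullet> e1 = 0" "v \<bullet> e2 = 0" "e2 \<bullet> v = 0"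
  using unit_e1 unit_v unit_e2 e1_v v_e1 by (simp_all add: norm_eq_1 dot_cross_self)

lemma frame_nonzero: "e1 \<noteq> 0" "v \<noteq> 0" "e2 \<noteq> 0"
  using unit_e1 unit_v unit_e2 by auto

lemma frame_expansion: "x = (x \<bullet> v) *\<^sub>R v + (x \<bullet> e1) *\<^sub>R e1 + (x \<bullet> e2) *\<^sub>R e2"
  using orthonormal_expansion_cross3 unit_v unit_e1 v_e1 .

lemma lam_pos: "0 < lam"
  using pos_def[OF frame_nonzero(2)] by (simp add: eigen)

lemma invertible: "invertible U"
  using sym_pos_def by (rule sym_pos_def_matrix_invertible)

lemma U_Ui: "U *v (Ui *v x) = x" and Ui_U: "Ui *v (U *v x) = x"
  using invertible by (rule invertible_matrix_inv_mult_vector)+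

lemma Ui_inner: "(Ui *v x) \<bullet> y = x \<bullet> (Ui *v y)"
  using symmetric invertible by (rule symmetric_matrix_inv_inner)

lemma Ui_v: "Ui *v v = (1 / lam) *\<^sub>R v"
proof -
  have "lam *\<^sub>R (Ui *v v) = v"
    using Ui_U[of v] by (simp add: eigen matrix_vector_mult_scaleR)
  moreover have "Ui *v v = (1 / lam) *\<^sub>R (lam *\<^sub>R (Ui *v v))"
    using lam_pos by simp
  ultimately show ?thesis
    by simp
qed

lemma Ui_orthogonal_v: "x \<bullet> v = 0 \<Longrightarrow> (Ui *v x) \<bullet> v = 0"
  by (simp add: Ui_inner Ui_v)

lemma U_e1: "U *v e1 = p *\<^sub>R e1 + q *\<^sub>R e2"
proof -
  have "(U *v e1) \<bullet> v = 0"
    by (simp add: U_inner eigen)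
  then show ?thesis
    using frame_expansion[of "U *v e1"] by (simp add: inner_commute p_def q_def)
qed

lemma U_e2: "U *v e2 = r *\<^sub>R e2 + q *\<^sub>R e1"
proof -
  have "(U *v e2) \<bullet> v = 0" "(U *v e2) \<bullet> e1 = q"
    by (simp_all add: U_inner eigen q_def)
  then show ?thesis
    using frame_expansion[of "U *v e2"] by (simp add: inner_commute r_def add.commute)
qed

lemma p_pos: "0 < p"
  unfolding p_def using pos_def[OF frame_nonzero(1)] .

lemma r_pos: "0 < r"
  unfolding r_def using pos_def[OF frame_nonzero(3)] .

lemma Uh_mult_vector: "Uh *v x = U *v x - (2 * q) *\<^sub>R ((e1 \<bullet> x) *\<^sub>R e2 + (e2 \<bullet> x) *\<^sub>R e1)"
  using halfturn_conj_mult_vector_plane[OF symmetric unit_e1 frame_inner(6) U_e1] by simp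

lemma halfturn_e2_conj: "halfturn e2 ** U ** halfturn e2 = Uh"
  unfolding matrix_eq
  using halfturn_conj_mult_vector_plane[OF symmetric unit_e2 frame_inner(7) U_e2]
  by (simp add: Uh_mult_vector add.commute)

lemma q_neq_0:
  assumes "Uh \<noteq> U"
  shows "q \<noteq> 0"
  using assms by (auto simp: matrix_eq Uh_mult_vector)

lemma inner_U_e1: "e1 \<bullet> (U *v x) = p * (e1 \<bullet> x) + q * (e2 \<bullet> x)"
  by (simp add: U_inner[symmetric] U_e1 inner_add_left)

lemma inner_U_e2: "e2 \<bullet> (U *v x) = q * (e1 \<bullet> x) + r * (e2 \<bullet> x)"
  by (simp add: U_inner[symmetric] U_e2 inner_add_left)

lemma Uh_norm:
  "(Uh *v x) \<bullet> (Uh *v x) = (U *v x) \<bullet> (U *v x) - 4 * q * (p + r) * (e1 \<bullet> x) * (e2 \<bullet> x)"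
proof -
  define y where "y = (e1 \<bullet> x) *\<^sub>R e2 + (e2 \<bullet> x) *\<^sub>R e1"
  have Uxy: "(U *v x) \<bullet> y = q * ((e1 \<bullet> x)\<^sup>2 + (e2 \<bullet> x)\<^sup>2) + (p + r) * (e1 \<bullet> x) * (e2 \<bullet> x)"
    by (simp add: y_def inner_add_right inner_commute[of "U *v x"] inner_U_e1 inner_U_e2
        power2_eq_square algebra_simps)
  have yy: "y \<bullet> y = (e1 \<bullet> x)\<^sup>2 + (e2 \<bullet> x)\<^sup>2"
    by (simp add: y_def inner_add_left inner_add_right power2_eq_square)
  show ?thesis
    unfolding Uh_mult_vector y_def[symmetric] inner_diff_scaleR_self Uxy yy
    by (simp add: power2_eq_square algebra_simps)
qed

lemma Uh_v: "Uh *v v = lam *\<^sub>R v"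
  by (simp add: Uh_mult_vector eigen)

lemma Uh_orthogonal_v:
  assumes "x \<bullet> v = 0"
  shows "(Uh *v x) \<bullet> v = 0"
  using assms by (simp add: Uh_mult_vector inner_diff_left inner_add_left U_inner eigen)

lemma Uh_nonzero:
  assumes "x \<noteq> 0"
  shows "Uh *v x \<noteq> 0"
proof
  assume "Uh *v x = 0"
  then have "halfturn e1 *v (halfturn e1 *v (U *v (halfturn e1 *v x))) = 0"
    by (simp flip: matrix_vector_mul_assoc)
  then have "halfturn e1 *v x = 0"
    using pos_def by (force simp: halfturn_halfturn_mult_vector[OF unit_e1])
  then show False
    using assms halfturn_halfturn_mult_vector[OF unit_e1, of x] by simp
qed

lemma halfturn_conj_eq_Uh_orthogonal:
  assumes "halfturn u ** U ** halfturn u = Uh" "u \<bullet> x = 0"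
  shows "q *\<^sub>R ((e1 \<bullet> x) *\<^sub>R e2 + (e2 \<bullet> x) *\<^sub>R e1) = ((U *v u) \<bullet> x) *\<^sub>R u"
proof -
  have "(halfturn u ** U ** halfturn u) *v x = Uh *v x"
    using assms(1) by simp
  then have "(2 * ((U *v u) \<bullet> x)) *\<^sub>R u = (2 * q) *\<^sub>R ((e1 \<bullet> x) *\<^sub>R e2 + (e2 \<bullet> x) *\<^sub>R e1)"
    unfolding halfturn_conj_mult_vector_orthogonal[OF symmetric assms(2)] Uh_mult_vector by simp
  then show ?thesis
    by (simp flip: scaleR_scaleR)
qed

lemma halfturn_conj_eq_Uh_imp_e2:
  assumes "Uh \<noteq> U" "norm u = 1" "\<not> parallel u e1" "halfturn u ** U ** halfturn u = Uh"
  shows "u = e2 \<or> u = - e2"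
proof -
  have q: "q \<noteq> 0"
    using q_neq_0[OF assms(1)] .
  define g a b where "g = u \<bullet> v" and "a = u \<bullet> e1" and "b = u \<bullet> e2"
  note key = halfturn_conj_eq_Uh_orthogonal[OF assms(4)]
  have u: "u = g *\<^sub>R v + a *\<^sub>R e1 + b *\<^sub>R e2"
    unfolding g_def a_def b_def by (rule frame_expansion)
  have "g = 0"
  proof (rule ccontr)
    assume "g \<noteq> 0"
    define m where "m = (U *v u) \<bullet> (g *\<^sub>R e1 - a *\<^sub>R v)"
    have k: "(q * g) *\<^sub>R e2 = m *\<^sub>R u"
      using key[of "g *\<^sub>R e1 - a *\<^sub>R v"]
      by (simp add: m_def g_def a_def inner_diff_right)
    from arg_cong[of _ _ "\<lambda>y. y \<bullet> v", OF k] have "m * g = 0"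
      by (simp add: g_def)
    with k \<open>g \<noteq> 0\<close> have "(q * g) *\<^sub>R e2 = 0"
      by simp
    then show False
      using q \<open>g \<noteq> 0\<close> frame_nonzero(3) by simp
  qed
  have "b \<noteq> 0"
  proof
    assume "b = 0"
    then have "u = a *\<^sub>R e1"
      using u \<open>g = 0\<close> by simp
    then show False
      using assms(3) unfolding parallel_def by blast
  qed
  have "a = 0"
  proof -
    define m where "m = (U *v u) \<bullet> (b *\<^sub>R e1 - a *\<^sub>R e2)"
    have k: "q *\<^sub>R (b *\<^sub>R e2 - a *\<^sub>R e1) = m *\<^sub>R u"
      using key[of "b *\<^sub>R e1 - a *\<^sub>R e2"]
      by (simp add: m_def a_def b_def inner_diff_right algebra_simps)
    from arg_cong[of _ _ "\<lambda>y. y \<bullet> e2", OF k] have "q * b = m * b"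
      by (simp add: b_def inner_diff_left)
    with \<open>b \<noteq> 0\<close> have "m = q"
      by simp
    moreover from arg_cong[of _ _ "\<lambda>y. y \<bullet> e1", OF k] have "- (q * a) = m * a"
      by (simp add: a_def inner_diff_left)
    ultimately show "a = 0"
      using q by simp
  qed
  have "u = b *\<^sub>R e2"
    using u \<open>g = 0\<close> \<open>a = 0\<close> by simp
  moreover have "\<bar>b\<bar> = 1"
    using assms(2) \<open>u = b *\<^sub>R e2\<close> unit_e2 by simp
  ultimately show ?thesis
    by (auto simp: abs_if split: if_splits)
qed

lemma normal_orthogonal_if_kernel_in_coordinate_planes:
  assumes "\<And>x. n \<bullet> x = 0 \<Longrightarrow> (e1 \<bullet> x) * (e2 \<bullet> x) = 0"
  shows "n \<bullet> v = 0 \<and> (n \<bullet> e1 = 0 \<or> n \<bullet> e2 = 0)"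
proof -
  define n1 n2 n3 where "n1 = n \<bullet> e1" and "n2 = n \<bullet> e2" and "n3 = n \<bullet> v"
  have "(e1 \<bullet> (n2 *\<^sub>R e1 - n1 *\<^sub>R e2)) * (e2 \<bullet> (n2 *\<^sub>R e1 - n1 *\<^sub>R e2)) = 0"
    by (rule assms) (simp add: inner_diff_right n1_def n2_def)
  then have n12: "n1 = 0 \<or> n2 = 0"
    by (auto simp: inner_diff_right)
  have "n3 = 0"
  proof (cases "n1 = 0")
    case True
    have "(e1 \<bullet> (e1 + n3 *\<^sub>R e2 - n2 *\<^sub>R v)) * (e2 \<bullet> (e1 + n3 *\<^sub>R e2 - n2 *\<^sub>R v)) = 0"
      by (rule assms) (use True in \<open>simp add: inner_diff_right inner_add_right n1_def n2_def n3_def\<close>)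
    then show ?thesis
      by (simp add: inner_diff_right inner_add_right)
  next
    case False
    with n12 have "n2 = 0"
      by simp
    have "(e1 \<bullet> (n3 *\<^sub>R e1 + e2 - n1 *\<^sub>R v)) * (e2 \<bullet> (n3 *\<^sub>R e1 + e2 - n1 *\<^sub>R v)) = 0"
      by (rule assms) (use \<open>n2 = 0\<close> in \<open>simp add: inner_diff_right inner_add_right n1_def n2_def n3_def\<close>)
    then show ?thesis
      by (simp add: inner_diff_right inner_add_right)
  qed
  with n12 show ?thesis
    unfolding n1_def n2_def n3_def by (simp add: inner_commute)
qed

lemma twin_solution_normal:
  assumes "Uh \<noteq> U" "orthogonal_matrix R" "R ** Uh - U = dyad a n"
  shows "n \<bullet> v = 0 \<and> (n \<bullet> e1 = 0 \<or> n \<bullet> e2 = 0)"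
proof (rule normal_orthogonal_if_kernel_in_coordinate_planes)
  fix x
  assume "n \<bullet> x = 0"
  then have "4 * q * (p + r) * (e1 \<bullet> x) * (e2 \<bullet> x) = 0"
    using dyad_solution_norm_eq[OF assms(2,3)] Uh_norm[of x] by simp
  then show "(e1 \<bullet> x) * (e2 \<bullet> x) = 0"
    using q_neq_0[OF assms(1)] p_pos r_pos by simp
qed

lemma twin_solution_rotation_unique:
  assumes R: "rotation_matrix R" "R ** Uh - U = dyad a n"
    and R': "rotation_matrix R'" "R' ** Uh - U = dyad a' n'"
    and "n \<bullet> v = 0" "n' \<bullet> v = 0" "n \<bullet> x = 0" "n' \<bullet> x = 0" "x \<bullet> v = 0" "x \<noteq> 0"
  shows "R = R'"
proof (rule rotation_matrix_eq_on_orthogonal_pair[OF R(1) R'(1)])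
  show "(Uh *v v) \<bullet> (Uh *v x) = 0"
    using Uh_orthogonal_v[OF \<open>x \<bullet> v = 0\<close>] by (simp add: Uh_v inner_commute)
  show "Uh *v v \<noteq> 0" "Uh *v x \<noteq> 0"
    using Uh_nonzero frame_nonzero(2) \<open>x \<noteq> 0\<close> by blast+
  show "R *v (Uh *v v) = R' *v (Uh *v v)" "R *v (Uh *v x) = R' *v (Uh *v x)"
    using assms by (simp_all add: dyad_solution_mult_vector)
qed

lemma twin_vector_e1:
  defines "c \<equiv> Ui *v e1"
  shows "2 *\<^sub>R ((1 / (c \<bullet> c)) *\<^sub>R c - U *v e1)
    = (2 * (e2 \<bullet> (Ui ** Ui *v e1)) / (e1 \<bullet> (Ui ** Ui *v e1))) *\<^sub>R (U *v e2)"
proof -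
  have cc: "c \<bullet> c = e1 \<bullet> (Ui *v c)"
    by (simp add: c_def Ui_inner)
  have "c \<noteq> 0"
    using U_Ui[of e1] frame_nonzero(1) by (auto simp: c_def)
  then have "0 < c \<bullet> c"
    by simp
  define y where "y = 2 *\<^sub>R ((1 / (c \<bullet> c)) *\<^sub>R (Ui *v c) - e1)"
  have "y \<bullet> e1 = 0"
    using \<open>0 < c \<bullet> c\<close> by (simp add: y_def cc inner_diff_left inner_diff_right inner_commute)
  moreover have "y \<bullet> v = 0"
    by (simp add: y_def c_def inner_diff_left Ui_orthogonal_v)
  ultimately have "y = (y \<bullet> e2) *\<^sub>R e2"
    using frame_expansion[of y] by simp
  then have "U *v y = (y \<bullet> e2) *\<^sub>R (U *v e2)"
    by (metis matrix_vector_mult_scaleR)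
  moreover have "U *v y = 2 *\<^sub>R ((1 / (c \<bullet> c)) *\<^sub>R c - U *v e1)"
    by (simp add: y_def matrix_vector_mult_scaleR matrix_vector_mult_diff_distrib U_Ui)
  moreover have "Ui *v c = Ui ** Ui *v e1"
    by (simp add: c_def matrix_vector_mul_assoc)
  then have "y \<bullet> e2 = 2 * (e2 \<bullet> (Ui ** Ui *v e1)) / (e1 \<bullet> (Ui ** Ui *v e1))"
    by (simp add: y_def cc inner_diff_left inner_diff_right inner_commute)
  ultimately show ?thesis
    by simp
qed

lemma twin_vector_e2:
  defines "d \<equiv> Ui *v e2"
  shows "2 *\<^sub>R ((1 / (d \<bullet> d)) *\<^sub>R d - U *v e2)
    = (- 2 * (e2 \<bullet> (U ** U *v e1)) / (e1 \<bullet> (U ** U *v e1))) *\<^sub>R (U *v e1)"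
proof -
  have dd: "d \<bullet> d = e2 \<bullet> (Ui *v d)"
    by (simp add: d_def Ui_inner)
  have "d \<noteq> 0"
    using U_Ui[of e2] frame_nonzero(3) by (auto simp: d_def)
  then have "0 < d \<bullet> d"
    by simp
  define y where "y = 2 *\<^sub>R ((1 / (d \<bullet> d)) *\<^sub>R (Ui *v d) - e2)"
  have "y \<bullet> e2 = 0"
    using \<open>0 < d \<bullet> d\<close> by (simp add: y_def dd inner_diff_left inner_diff_right inner_commute)
  moreover have "y \<bullet> v = 0"
    by (simp add: y_def d_def inner_diff_left Ui_orthogonal_v)
  ultimately have y: "y = (y \<bullet> e1) *\<^sub>R e1"
    using frame_expansion[of y] by simp
  have Uy: "U *v y = 2 *\<^sub>R ((1 / (d \<bullet> d)) *\<^sub>R d - U *v e2)"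
    by (simp add: y_def matrix_vector_mult_scaleR matrix_vector_mult_diff_distrib U_Ui)
  have "e1 \<bullet> (U *v (U *v y)) = - 2 * (e1 \<bullet> (U *v (U *v e2)))"
    by (simp add: Uy d_def matrix_vector_mult_scaleR matrix_vector_mult_diff_distrib U_Ui
        inner_diff_right)
  also have "e1 \<bullet> (U *v (U *v e2)) = e2 \<bullet> (U *v (U *v e1))"
    by (metis U_inner inner_commute)
  finally have "(y \<bullet> e1) * (e1 \<bullet> (U *v (U *v e1))) = - 2 * (e2 \<bullet> (U *v (U *v e1)))"
    using y by (metis inner_scaleR_right matrix_vector_mult_scaleR)
  moreover have "U *v e1 \<noteq> 0"
    using Ui_U[of e1] frame_nonzero(1) by auto
  then have "0 < e1 \<bullet> (U *v (U *v e1))"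
    using U_inner[of e1 "U *v e1", symmetric] by simp
  ultimately have "y \<bullet> e1 = - 2 * (e2 \<bullet> (U ** U *v e1)) / (e1 \<bullet> (U ** U *v e1))"
    by (simp add: field_simps flip: matrix_vector_mul_assoc)
  with y Uy show ?thesis
    by (metis matrix_vector_mult_scaleR)
qed

lemma twin_solutions_eq:
  assumes "Uh \<noteq> U"
  shows "twin_solutions U Uh =
    {dyad ((2 * (e2 \<bullet> (Ui ** Ui *v e1)) / (e1 \<bullet> (Ui ** Ui *v e1))) *\<^sub>R (U *v e2)) e1,
     dyad ((- 2 * (e2 \<bullet> (U ** U *v e1)) / (e1 \<bullet> (U ** U *v e1))) *\<^sub>R (U *v e1)) e2}"
    (is "_ = {?D1, ?D2}")
proof
  obtain R1 where R1: "rotation_matrix R1" "R1 ** Uh - U = ?D1"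
    using halfturn_conj_twin_solution[OF symmetric invertible unit_e1] twin_vector_e1 by metis
  obtain R2 where R2: "rotation_matrix R2" "R2 ** Uh - U = ?D2"
    using halfturn_conj_twin_solution[OF symmetric invertible unit_e2] twin_vector_e2
    unfolding halfturn_e2_conj by metis
  show "{?D1, ?D2} \<subseteq> twin_solutions U Uh"
    using R1 R2 unfolding twin_solutions_def by blast
  show "twin_solutions U Uh \<subseteq> {?D1, ?D2}"
  proof
    fix D
    assume "D \<in> twin_solutions U Uh"
    then obtain a n R where R: "rotation_matrix R" "R ** Uh - U = dyad a n" and D: "D = dyad a n"
      unfolding twin_solutions_def by blast
    have n: "n \<bullet> v = 0 \<and> (n \<bullet> e1 = 0 \<or> n \<bullet> e2 = 0)"
      using twin_solution_normal[OF assms _ R(2)] R(1) by (simp add: rotation_matrix_def)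
    show "D \<in> {?D1, ?D2}"
    proof (cases "n \<bullet> e2 = 0")
      case True
      then have "R = R1"
        using twin_solution_rotation_unique[OF R R1, of e2] n frame_nonzero by simp
      then show ?thesis
        using R(2) R1(2) D by simp
    next
      case False
      then have "R = R2"
        using twin_solution_rotation_unique[OF R R2, of e1] n frame_nonzero by simp
      then show ?thesis
        using R(2) R2(2) D by simp
    qed
  qed
qed

end

lemma eigen_frame_of_eigenvector:
  assumes "sym_pos_def_matrix U" "norm e1 = 1" "is_eigenvector U v" "e1 \<bullet> v = 0"
  shows "\<exists>lam. eigen_frame U e1 (sgn v) lam"
proof -
  obtain lam where "U *v v = lam *\<^sub>R v" "v \<noteq> 0"
    using assms(3) unfolding is_eigenvector_def by blast
  then have "eigen_frame U e1 (sgn v) lam"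
    using assms(1,2,4)
    by unfold_locales (simp_all add: norm_sgn sgn_div_norm matrix_vector_mult_scaleR)
  then show ?thesis ..
qed

lemma halfturn_conj_twin_axis_iff:
  assumes "sym_pos_def_matrix U" "norm e1 = 1"
  shows "(\<exists>e2. norm e2 = 1 \<and> \<not> parallel e2 e1 \<and>
            halfturn e2 ** U ** halfturn e2 = halfturn e1 ** U ** halfturn e1)
     \<longleftrightarrow> (\<exists>v. is_eigenvector U v \<and> e1 \<bullet> v = 0)"
proof
  assume "\<exists>e2. norm e2 = 1 \<and> \<not> parallel e2 e1 \<and>
            halfturn e2 ** U ** halfturn e2 = halfturn e1 ** U ** halfturn e1"
  then obtain e2 where "is_eigenvector U (cross3 e1 e2)"
    using halfturn_conj_eq_imp_eigenvector by blast
  then show "\<exists>v. is_eigenvector U v \<and> e1 \<bullet> v = 0"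
    using dot_cross_self(1) by blast
next
  assume "\<exists>v. is_eigenvector U v \<and> e1 \<bullet> v = 0"
  then obtain v lam where "eigen_frame U e1 (sgn v) lam"
    using eigen_frame_of_eigenvector[OF assms] by blast
  then interpret eigen_frame U e1 "sgn v" lam .
  show "\<exists>e2. norm e2 = 1 \<and> \<not> parallel e2 e1 \<and>
            halfturn e2 ** U ** halfturn e2 = halfturn e1 ** U ** halfturn e1"
    using unit_e2 not_parallel_orthonormal[OF unit_e2 unit_e1] halfturn_e2_conj by auto
qed

lemma halfturn_conj_twin_axis_unique:
  assumes "sym_pos_def_matrix U" "norm e1 = 1" "halfturn e1 ** U ** halfturn e1 \<noteq> U"
    and "is_eigenvector U v" "e1 \<bullet> v = 0"
    and "norm e2 = 1" "\<not> parallel e2 e1"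
      "halfturn e2 ** U ** halfturn e2 = halfturn e1 ** U ** halfturn e1"
    and "norm e2' = 1" "\<not> parallel e2' e1"
      "halfturn e2' ** U ** halfturn e2' = halfturn e1 ** U ** halfturn e1"
  shows "(e2' = e2 \<or> e2' = - e2) \<and> e2 \<bullet> e1 = 0 \<and> e2 \<bullet> v = 0"
proof -
  obtain lam where "eigen_frame U e1 (sgn v) lam"
    using eigen_frame_of_eigenvector[OF assms(1,2,4,5)] ..
  then interpret eigen_frame U e1 "sgn v" lam .
  have "e2 = cross3 (sgn v) e1 \<or> e2 = - cross3 (sgn v) e1"
    and "e2' = cross3 (sgn v) e1 \<or> e2' = - cross3 (sgn v) e1"
    using halfturn_conj_eq_Uh_imp_e2 assms(3,6-11) by blast+
  moreover have "cross3 (sgn v) e1 \<bullet> v = 0"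
    using frame_inner(9) frame_nonzero(2) by (simp add: sgn_div_norm)
  ultimately show ?thesis
    by auto
qed

lemma twin_solutions_halfturn_conj:
  assumes "sym_pos_def_matrix U" "norm e1 = 1" "halfturn e1 ** U ** halfturn e1 \<noteq> U"
    and "is_eigenvector U v" "norm v = 1" "e1 \<bullet> v = 0"
  shows "let e2 = cross3 v e1;
             Ui = matrix_inv U;
             \<xi> = 2 * (e2 \<bullet> (Ui ** Ui *v e1)) / (e1 \<bullet> (Ui ** Ui *v e1));
             \<eta> = - 2 * (e2 \<bullet> (U ** U *v e1)) / (e1 \<bullet> (U ** U *v e1))
         in twin_solutions U (halfturn e1 ** U ** halfturn e1)
            = {dyad (\<xi> *\<^sub>R (U *v e2)) e1, dyad (\<eta> *\<^sub>R (U *v e1)) e2}"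
proof -
  obtain lam where "eigen_frame U e1 (sgn v) lam"
    using eigen_frame_of_eigenvector[OF assms(1,2,4,6)] ..
  then interpret eigen_frame U e1 v lam
    using assms(5) by (simp add: sgn_div_norm)
  show ?thesis
    unfolding Let_def using twin_solutions_eq[OF assms(3)] .
qed

theorem proposition1:
  fixes U :: "real^3^3" and e1 :: "real^3"
  assumes U: "sym_pos_def_matrix U"
    and e1: "norm e1 = 1"
    and Uh: "halfturn e1 ** U ** halfturn e1 \<noteq> U"
  shows "((\<exists>e2. norm e2 = 1 \<and> \<not> parallel e2 e1 \<and>
             halfturn e2 ** U ** halfturn e2 = halfturn e1 ** U ** halfturn e1)
          \<longleftrightarrow> (\<exists>v. is_eigenvector U v \<and> e1 \<bullet> v = 0))
    \<and> (\<forall>v. is_eigenvector U v \<and> e1 \<bullet> v = 0 \<longrightarrow>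
          (\<forall>e2 e2'. norm e2 = 1 \<and> \<not> parallel e2 e1 \<and>
                 halfturn e2 ** U ** halfturn e2 = halfturn e1 ** U ** halfturn e1 \<and>
                 norm e2' = 1 \<and> \<not> parallel e2' e1 \<and>
                 halfturn e2' ** U ** halfturn e2' = halfturn e1 ** U ** halfturn e1
             \<longrightarrow> (e2' = e2 \<or> e2' = - e2) \<and> e2 \<bullet> e1 = 0 \<and> e2 \<bullet> v = 0))
    \<and> (\<forall>v. is_eigenvector U v \<and> norm v = 1 \<and> e1 \<bullet> v = 0 \<longrightarrow>
          (let e2 = cross3 v e1;
               Ui = matrix_inv U;
               \<xi> = 2 * (e2 \<bullet> (Ui ** Ui *v e1)) / (e1 \<bullet> (Ui ** Ui *v e1));
               \<eta> = - 2 * (e2 \<bullet> (U ** U *v e1)) / (e1 \<bullet> (U ** U *v e1))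
           in twin_solutions U (halfturn e1 ** U ** halfturn e1)
              = {dyad (\<xi> *\<^sub>R (U *v e2)) e1, dyad (\<eta> *\<^sub>R (U *v e1)) e2}))"
  using halfturn_conj_twin_axis_iff[OF U e1]
    halfturn_conj_twin_axis_unique[OF U e1 Uh]
    twin_solutions_halfturn_conj[OF U e1 Uh]
  by blast

end
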